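(* For every $m\ge1$, let $V^{(1)}_m$ and $V^{(2)}_m$ be the linear spans in $\mathbb{C}[\mathbb{S}_m]$ of all one-hyper-arc elements and of all two-hyper-arc elements, respectively, and let $R_m$ be the span of all $\alpha-\sigma_m^{-1}\alpha\sigma_m$, $\alpha\in\mathbb{S}_m$. Then $V^{(1)}_m+V^{(2)}_m=R_m+V^{(2)}_m$; i.e. modulo two-hyper-arc relations, the one-hyper-arc relations are equivalent to identifying each permutation with its cyclic shifts.
   Context: $\sigma_m=(1,2,\dots,m)\in\mathbb{S}_m$. Generalized Vassiliev elements: let $m\ge2$, $\gamma\in\mathbb{S}_{m-1}$, and $q\in[m-1]\cup\{*\}$. For $t\in\{0,1,\dots,m-1\}$ let $\alpha_t=\alpha_t(\gamma,q)\in\mathbb{S}_m$ be obtained as follows: place the points $1,\dots,m-1$ on a line in increasing order, insert a new point $x$ (the free leg) in the gap between $t$ and $t+1$ (before $1$ if $t=0$, after $m-1$ if $t=m-1$), and relabel the $m$ points by $1,\dots,m$ in order; the permutation acts as $\gamma$ on the old points, except that if $q\neq *$ then $q\mapsto x\mapsto\gamma(q)$, and if $q=*$ then $x$ is a fixed point. For a cycle $v$ of $\gamma$ put $E(\gamma,q,v)=\sum_{j\in v}(\alpha_{j-1}-\alpha_j)\in\mathbb{C}[\mathbb{S}_m]$. It is a one-hyper-arc element if $q\ne*$ and $q\in v$, and a two-hyper-arc element otherwise. *)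

theory Defs
  imports Complex_Main "HOL-Combinatorics.Permutations"
begin

text \<open>Elements of the group algebra C[S_m] are represented as functions
  from permutations (maps nat => nat that permute {1..m}) to complex coefficients.
  Vector operations are pointwise.\<close>

type_synonym galg = "(nat \<Rightarrow> nat) \<Rightarrow> complex"

definition basis_elt :: "(nat \<Rightarrow> nat) \<Rightarrow> galg" where
  "basis_elt a = (\<lambda>p. if p = a then 1 else 0)"

definition lspan :: "galg set \<Rightarrow> galg set" where
  "lspan S = {f. \<exists>T c. finite T \<and> T \<subseteq> S \<and> f = (\<lambda>p. \<Sum>v\<in>T. c v * v p)}"

definition setsum_sp :: "galg set \<Rightarrow> galg set \<Rightarrow> galg set" where
  "setsum_sp A B = {(\<lambda>p. a p + b p) | a b. a \<in> A \<and> b \<in> B}"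

definition sigma :: "nat \<Rightarrow> nat \<Rightarrow> nat" where
  "sigma m j = (if 1 \<le> j \<and> j < m then j + 1 else if j = m then 1 else j)"

text \<open>New label of old point i when the free leg is inserted in the gap after t.\<close>
definition ins :: "nat \<Rightarrow> nat \<Rightarrow> nat" where
  "ins t i = (if i \<le> t then i else i + 1)"

text \<open>alpha_t(gamma,q) in S_m; q = None encodes q = *. The free leg x gets label t+1.\<close>
definition alpha :: "nat \<Rightarrow> (nat \<Rightarrow> nat) \<Rightarrow> nat option \<Rightarrow> nat \<Rightarrow> nat \<Rightarrow> nat" where
  "alpha m \<gamma> q t j =
     (if j < 1 \<or> m < j then j
      else if j = t + 1 then (case q of None \<Rightarrow> t + 1 | Some q' \<Rightarrow> ins t (\<gamma> q'))
      else (let i = (if j \<le> t then j else j - 1) in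
            if q = Some i then t + 1 else ins t (\<gamma> i)))"

definition is_cycle_of :: "(nat \<Rightarrow> nat) \<Rightarrow> nat \<Rightarrow> nat set \<Rightarrow> bool" where
  "is_cycle_of \<gamma> n v \<longleftrightarrow> (\<exists>a\<in>{1..n}. v = {(\<gamma> ^^ k) a | k. True})"

definition E_elt :: "nat \<Rightarrow> (nat \<Rightarrow> nat) \<Rightarrow> nat option \<Rightarrow> nat set \<Rightarrow> galg" where
  "E_elt m \<gamma> q v = (\<lambda>p. \<Sum>j\<in>v. basis_elt (alpha m \<gamma> q (j - 1)) p - basis_elt (alpha m \<gamma> q j) p)"

definition valid_q :: "nat \<Rightarrow> nat option \<Rightarrow> bool" where
  "valid_q n q \<longleftrightarrow> (case q of None \<Rightarrow> True | Some q' \<Rightarrow> q' \<in> {1..n})"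

definition one_hyper :: "nat \<Rightarrow> galg set" where
  "one_hyper m = {E_elt m \<gamma> q v | \<gamma> q v. 2 \<le> m \<and> \<gamma> permutes {1..m-1} \<and> valid_q (m-1) q
      \<and> is_cycle_of \<gamma> (m-1) v \<and> (\<exists>q'. q = Some q' \<and> q' \<in> v)}"

definition two_hyper :: "nat \<Rightarrow> galg set" where
  "two_hyper m = {E_elt m \<gamma> q v | \<gamma> q v. 2 \<le> m \<and> \<gamma> permutes {1..m-1} \<and> valid_q (m-1) q
      \<and> is_cycle_of \<gamma> (m-1) v \<and> \<not> (\<exists>q'. q = Some q' \<and> q' \<in> v)}"

definition rot_gens :: "nat \<Rightarrow> galg set" where
  "rot_gens m = {(\<lambda>p. basis_elt a p - basis_elt (inv (sigma m) \<circ> a \<circ> sigma m) p) | a. a permutes {1..m}}"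

end

theory Submission
  imports Defs "HOL-Combinatorics.Orbits" "HOL-Library.Function_Algebras"
begin

(* For fixed gamma and q the elements E(gamma,q,v), summed over all cycles v of gamma, telescope
   to alpha_0 - alpha_(m-1), and alpha_(m-1) is the conjugate of alpha_0 by sigma_m. If q is not *,
   exactly one of these cycles contains q, so each one-hyper-arc element is a rotation relation
   minus two-hyper-arc elements. Conversely every permutation is some alpha_0(gamma,q): after
   shifting labels down by one, alpha_0 is gamma composed with the transposition of the free leg
   (now at 0) and q, and every permutation of {0..<m} factors in this way. So every rotation
   relation is a sum of one- and two-hyper-arc elements. *)

interpretation galg: module "\<lambda>c (f :: galg) p. c * f p"
  by unfold_locales (auto simp: algebra_simps)

lemma sum_fun_apply: "(\<Sum>a\<in>A. f a) x = (\<Sum>a\<in>A. f a x)"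
  by (induction A rule: infinite_finite_induct) auto

lemma lspan_eq_span: "lspan S = galg.span S"
proof -
  have "(\<Sum>v\<in>T. (\<lambda>p. c v * v p)) = (\<lambda>p. \<Sum>v\<in>T. c v * v p)"
    for T and c :: "galg \<Rightarrow> complex"
    by (simp add: fun_eq_iff sum_fun_apply)
  then show ?thesis
    unfolding lspan_def galg.span_explicit by auto
qed

lemma setsum_sp_lspan: "setsum_sp (lspan A) (lspan B) = galg.span (A \<union> B)"
  unfolding galg.span_Un lspan_eq_span setsum_sp_def plus_fun_def ..

definition lift_perm :: "(nat \<Rightarrow> nat) \<Rightarrow> nat \<Rightarrow> nat" where
  "lift_perm \<rho> j = (if j = 0 then 0 else Suc (\<rho> (j - 1)))"

lemma bij_betw_Suc_pred:
  shows "bij_betw Suc {0..<n} {1..n}" and "bij_betw (\<lambda>j. j - 1) {1..n} {0..<n}"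
  by (auto intro!: bij_betw_byWitness[where f' = "\<lambda>j. j - 1"] bij_betw_byWitness[where f' = Suc])

lemma lift_perm_permutes:
  assumes "\<rho> permutes {0..<n}"
  shows "lift_perm \<rho> permutes {1..n}"
proof (rule bij_imp_permutes)
  from permutes_imp_bij[OF assms] bij_betw_Suc_pred
  have "bij_betw (Suc \<circ> \<rho> \<circ> (\<lambda>j. j - 1)) {1..n} {1..n}"
    by (blast intro: bij_betw_trans)
  then show "bij_betw (lift_perm \<rho>) {1..n} {1..n}"
    by (rule bij_betw_cong[THEN iffD1, rotated]) (simp add: lift_perm_def)
  show "lift_perm \<rho> j = j" if "j \<notin> {1..n}" for j
    using that permutes_not_in[OF assms, of "j - 1"] by (auto simp: lift_perm_def)
qed

lemma permutes_eq_lift_perm: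
  assumes "a permutes {1..n}"
  obtains \<rho> where "\<rho> permutes {0..<n}" and "a = lift_perm \<rho>"
proof
  have a0: "a 0 = 0" and a_pos: "a j \<noteq> 0" if "j \<noteq> 0" for j
    using that permutes_not_in[OF assms] permutes_in_image[OF assms, of j] by fastforce+
  show "a = lift_perm (\<lambda>i. a (Suc i) - 1)"
    using a0 a_pos by (auto simp: lift_perm_def fun_eq_iff)
  from permutes_imp_bij[OF assms] bij_betw_Suc_pred
  have "bij_betw ((\<lambda>j. j - 1) \<circ> a \<circ> Suc) {0..<n} {0..<n}"
    by (blast intro: bij_betw_trans)
  then show "(\<lambda>i. a (Suc i) - 1) permutes {0..<n}"
    using permutes_not_in[OF assms] by (intro bij_imp_permutes) (auto simp: comp_def)
qed

lemma permutes_factor_transpose: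
  assumes "p permutes S" and "a \<in> S"
  obtains \<gamma> b where "\<gamma> permutes S - {a}" and "b \<in> S" and "p = \<gamma> \<circ> transpose a b"
proof
  define b where "b = inv p a"
  show b: "b \<in> S"
    using assms by (simp add: b_def permutes_inv permutes_in_image)
  show "p = (p \<circ> transpose a b) \<circ> transpose a b"
    by (simp add: comp_assoc)
  have "p b = a"
    using assms by (simp add: b_def permutes_inverses)
  then show "p \<circ> transpose a b permutes S - {a}"
    using assms b by (intro permutes_superset[OF permutes_compose[OF permutes_swap_id assms(1)]]) auto
qed

(* After shifting labels down by one, the free leg of alpha_0 sits at position 0. *)
definition leg_swap :: "nat option \<Rightarrow> nat \<Rightarrow> nat" where
  "leg_swap q = (case q of None \<Rightarrow> id | Some q' \<Rightarrow> transpose 0 q')"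

lemma alpha_first_eq_lift_perm:
  assumes "\<gamma> permutes {1..m-1}" and "valid_q (m-1) q"
  shows "alpha m \<gamma> q 0 = lift_perm (\<gamma> \<circ> leg_swap q)"
proof
  fix j
  have \<gamma>_out: "\<gamma> i = i" if "i \<notin> {1..m-1}" for i
    using permutes_not_in[OF assms(1)] that by blast
  have \<gamma>_pos: "\<gamma> i \<noteq> 0" if "i \<in> {1..m-1}" for i
    using permutes_in_image[OF assms(1), of i] that by auto
  consider "j = 0" | "j = 1" | "2 \<le> j" "j \<le> m" | "m < j" "j \<noteq> 0"
    by linarith
  then show "alpha m \<gamma> q 0 j = lift_perm (\<gamma> \<circ> leg_swap q) j"
  proof cases
    case 2
    then show ?thesis
      using assms(2) \<gamma>_out[of 0] \<gamma>_pos
      by (cases q) (force simp: alpha_def lift_perm_def leg_swap_def ins_def valid_q_def)+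
  next
    case 3
    then have "\<gamma> (j - 1) \<noteq> 0"
      by (intro \<gamma>_pos) auto
    with 3 show ?thesis
      using assms(2) \<gamma>_out[of 0]
      by (cases q) (auto simp: alpha_def lift_perm_def leg_swap_def ins_def valid_q_def Let_def)
  next
    case 4
    then have "\<gamma> (j - 1) = j - 1"
      by (intro \<gamma>_out) auto
    with 4 show ?thesis
      using assms(2)
      by (cases q) (auto simp: alpha_def lift_perm_def leg_swap_def valid_q_def)
  qed (simp add: alpha_def lift_perm_def)
qed

lemma leg_swap_permutes: "valid_q (m-1) q \<Longrightarrow> leg_swap q permutes {0..<m}"
  by (cases q) (auto simp: leg_swap_def valid_q_def permutes_id intro!: permutes_swap_id)

lemma alpha_first_permutes:
  assumes "\<gamma> permutes {1..m-1}" and "valid_q (m-1) q"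
  shows "alpha m \<gamma> q 0 permutes {1..m}"
proof -
  have "\<gamma> permutes {0..<m}"
    using assms(1) by (rule permutes_subset) auto
  then have "\<gamma> \<circ> leg_swap q permutes {0..<m}"
    using leg_swap_permutes[OF assms(2)] by (rule permutes_compose[rotated])
  then show ?thesis
    unfolding alpha_first_eq_lift_perm[OF assms] by (rule lift_perm_permutes)
qed

lemma permutes_eq_alpha_first:
  assumes "1 \<le> m" and "a permutes {1..m}"
  obtains \<gamma> q where "\<gamma> permutes {1..m-1}" and "valid_q (m-1) q" and "alpha m \<gamma> q 0 = a"
proof -
  obtain \<rho> where \<rho>: "\<rho> permutes {0..<m}" "a = lift_perm \<rho>"
    using permutes_eq_lift_perm[OF assms(2)] .
  have "0 \<in> {0..<m}"
    using assms(1) by simp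
  then obtain \<gamma> b where "\<gamma> permutes {0..<m} - {0}" and b: "b \<in> {0..<m}"
    and "\<rho> = \<gamma> \<circ> transpose 0 b"
    by (rule permutes_factor_transpose[OF \<rho>(1)])
  moreover have "{0..<m} - {0} = {1..m-1}"
    using assms(1) by auto
  moreover define q where "q = (if b = 0 then None else Some b)"
  moreover have "leg_swap q = transpose 0 b" and "valid_q (m-1) q"
    using b by (auto simp: q_def leg_swap_def valid_q_def)
  ultimately show thesis
    using that \<rho>(2) alpha_first_eq_lift_perm by metis
qed

lemma inj_sigma: "1 \<le> m \<Longrightarrow> inj (sigma m)"
  by (auto simp: inj_def sigma_def)

lemma sigma_ins_last: "1 \<le> m \<Longrightarrow> sigma m (ins (m - 1) y) = ins 0 y"
  by (auto simp: sigma_def ins_def)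

lemma sigma_comp_alpha_last:
  assumes "1 \<le> m"
  shows "sigma m \<circ> alpha m \<gamma> q (m - 1) = alpha m \<gamma> q 0 \<circ> sigma m"
proof
  fix j
  have "sigma m m = 1"
    by (simp add: sigma_def)
  consider "1 \<le> j" "j < m" | "j = m" | "j = 0 \<or> m < j"
    using assms by linarith
  then show "(sigma m \<circ> alpha m \<gamma> q (m - 1)) j = (alpha m \<gamma> q 0 \<circ> sigma m) j"
  proof cases
    case 1
    then have "sigma m j = j + 1" and "j \<le> m - 1"
      by (simp_all add: sigma_def)
    with 1 \<open>sigma m m = 1\<close> show ?thesis
      using sigma_ins_last[OF assms] by (simp add: alpha_def Let_def)
  next
    case 2
    with assms \<open>sigma m m = 1\<close> show ?thesis
      using sigma_ins_last[OF assms] by (cases q) (simp_all add: alpha_def)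
  next
    case 3
    then show ?thesis
      by (auto simp: alpha_def sigma_def)
  qed
qed

lemma sigma_conj_alpha_first:
  assumes "1 \<le> m"
  shows "inv (sigma m) \<circ> alpha m \<gamma> q 0 \<circ> sigma m = alpha m \<gamma> q (m - 1)"
proof -
  have "inv (sigma m) \<circ> alpha m \<gamma> q 0 \<circ> sigma m
      = (inv (sigma m) \<circ> sigma m) \<circ> alpha m \<gamma> q (m - 1)"
    by (simp only: comp_assoc sigma_comp_alpha_last[OF assms, symmetric])
  then show ?thesis
    by (simp add: inv_o_cancel[OF inj_sigma[OF assms]])
qed

context
  fixes \<gamma> :: "nat \<Rightarrow> nat" and n :: nat
  assumes \<gamma>: "\<gamma> permutes {1..n}"
begin

lemma is_cycle_of_iff_orbit: "is_cycle_of \<gamma> n v \<longleftrightarrow> (\<exists>a\<in>{1..n}. v = orbit \<gamma> a)"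
  using orbit_altdef_permutation[OF permutes_imp_permutation[OF finite_atLeastAtMost \<gamma>]]
  by (simp add: is_cycle_of_def)

lemma cycles_eq_orbits: "{v. is_cycle_of \<gamma> n v} = orbit \<gamma> ` {1..n}"
  by (auto simp: is_cycle_of_iff_orbit)

lemma finite_cycles: "finite {v. is_cycle_of \<gamma> n v}"
  by (simp add: cycles_eq_orbits)

lemma is_cycle_of_eqI:
  assumes "is_cycle_of \<gamma> n v" "is_cycle_of \<gamma> n w" "x \<in> v" "x \<in> w"
  shows "v = w"
  using assms orbit_cyclic_eq3[OF cyclic_on_orbit[OF \<gamma> finite_atLeastAtMost]]
  by (metis is_cycle_of_iff_orbit)

lemma sum_over_cycles: "(\<Sum>v | is_cycle_of \<gamma> n v. sum f v) = sum f {1..n}"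
proof -
  have "\<Union>{v. is_cycle_of \<gamma> n v} = {1..n}"
    unfolding cycles_eq_orbits
    using permutes_orbit_subset[OF \<gamma>]
      permutation_self_in_orbit[OF permutes_imp_permutation[OF finite_atLeastAtMost \<gamma>]]
    by blast
  moreover have "finite v" if "is_cycle_of \<gamma> n v" for v
    using that permutes_imp_permutation[OF finite_atLeastAtMost \<gamma>]
    by (auto simp: is_cycle_of_iff_orbit intro!: finite_orbit permutation_self_in_orbit)
  moreover have "v \<inter> w = {}" if "is_cycle_of \<gamma> n v" "is_cycle_of \<gamma> n w" "v \<noteq> w" for v w
    using that is_cycle_of_eqI by blast
  ultimately show ?thesis
    using sum.Union_disjoint[of "{v. is_cycle_of \<gamma> n v}" f] by auto
qed

end

lemma E_elt_eq_sum:
  "E_elt m \<gamma> q v = (\<Sum>j\<in>v. basis_elt (alpha m \<gamma> q (j - 1)) - basis_elt (alpha m \<gamma> q j))"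
  by (simp add: E_elt_def fun_eq_iff sum_fun_apply)

lemma sum_E_elt_over_cycles:
  assumes "\<gamma> permutes {1..m-1}"
  shows "(\<Sum>v | is_cycle_of \<gamma> (m-1) v. E_elt m \<gamma> q v)
    = basis_elt (alpha m \<gamma> q 0) - basis_elt (alpha m \<gamma> q (m - 1))"
proof -
  have "(\<Sum>v | is_cycle_of \<gamma> (m-1) v. E_elt m \<gamma> q v)
      = (\<Sum>j\<in>{1..m-1}. basis_elt (alpha m \<gamma> q (j - 1)) - basis_elt (alpha m \<gamma> q j))"
    unfolding E_elt_eq_sum by (rule sum_over_cycles[OF assms])
  also have "\<dots> = basis_elt (alpha m \<gamma> q 0) - basis_elt (alpha m \<gamma> q (m - 1))"
    using sum_telescope''[of 0 "m - 1" "\<lambda>j. - basis_elt (alpha m \<gamma> q j)"] by simp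
  finally show ?thesis .
qed

lemma E_elt_mem_two_hyper:
  assumes "2 \<le> m" "\<gamma> permutes {1..m-1}" "valid_q (m-1) q" "is_cycle_of \<gamma> (m-1) v"
    and "\<And>q'. q = Some q' \<Longrightarrow> q' \<notin> v"
  shows "E_elt m \<gamma> q v \<in> two_hyper m"
  using assms unfolding two_hyper_def by blast

lemma E_elt_mem_hyper:
  assumes "2 \<le> m" "\<gamma> permutes {1..m-1}" "valid_q (m-1) q" "is_cycle_of \<gamma> (m-1) v"
  shows "E_elt m \<gamma> q v \<in> one_hyper m \<union> two_hyper m"
  using assms unfolding one_hyper_def two_hyper_def by blast

lemma rot_gens_eq:
  "rot_gens m = {basis_elt a - basis_elt (inv (sigma m) \<circ> a \<circ> sigma m) | a. a permutes {1..m}}"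
  by (simp add: rot_gens_def fun_diff_def)

lemma alpha_first_diff_last_mem_rot_gens:
  assumes "1 \<le> m" "\<gamma> permutes {1..m-1}" "valid_q (m-1) q"
  shows "basis_elt (alpha m \<gamma> q 0) - basis_elt (alpha m \<gamma> q (m - 1)) \<in> rot_gens m"
  using alpha_first_permutes[OF assms(2,3)] sigma_conj_alpha_first[OF assms(1)]
  unfolding rot_gens_eq by (intro CollectI exI[of _ "alpha m \<gamma> q 0"]) simp

lemma one_hyper_subset_span: "one_hyper m \<subseteq> galg.span (rot_gens m \<union> two_hyper m)"
proof
  fix e assume "e \<in> one_hyper m"
  then obtain \<gamma> q v q' where m: "2 \<le> m" and \<gamma>: "\<gamma> permutes {1..m-1}" and q: "valid_q (m-1) q"
    and v: "is_cycle_of \<gamma> (m-1) v" and "q = Some q'" "q' \<in> v" and e: "e = E_elt m \<gamma> q v"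
    unfolding one_hyper_def by blast
  let ?C = "{v. is_cycle_of \<gamma> (m-1) v}"
  have e_eq: "e = (basis_elt (alpha m \<gamma> q 0) - basis_elt (alpha m \<gamma> q (m - 1)))
      - (\<Sum>w\<in>?C - {v}. E_elt m \<gamma> q w)"
    using sum_E_elt_over_cycles[OF \<gamma>, of q] v e
      sum.remove[OF finite_cycles[OF \<gamma>] _, of v "E_elt m \<gamma> q"]
    by (simp add: algebra_simps)
  have "E_elt m \<gamma> q w \<in> two_hyper m" if "w \<in> ?C - {v}" for w
    using that is_cycle_of_eqI[OF \<gamma> v, of w q'] \<open>q = Some q'\<close> \<open>q' \<in> v\<close>
    by (intro E_elt_mem_two_hyper[OF m \<gamma> q]) auto
  then have "(\<Sum>w\<in>?C - {v}. E_elt m \<gamma> q w) \<in> galg.span (rot_gens m \<union> two_hyper m)"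
    by (intro galg.span_sum galg.span_base) blast
  moreover have "basis_elt (alpha m \<gamma> q 0) - basis_elt (alpha m \<gamma> q (m - 1))
      \<in> galg.span (rot_gens m \<union> two_hyper m)"
    using alpha_first_diff_last_mem_rot_gens[OF _ \<gamma> q] m by (intro galg.span_base) simp
  ultimately show "e \<in> galg.span (rot_gens m \<union> two_hyper m)"
    unfolding e_eq by (rule galg.span_diff[rotated])
qed

lemma rot_gens_subset_span:
  assumes "1 \<le> m"
  shows "rot_gens m \<subseteq> galg.span (one_hyper m \<union> two_hyper m)"
proof
  fix x assume "x \<in> rot_gens m"
  then obtain a where a: "a permutes {1..m}"
    and x: "x = basis_elt a - basis_elt (inv (sigma m) \<circ> a \<circ> sigma m)"
    unfolding rot_gens_eq by blast
  show "x \<in> galg.span (one_hyper m \<union> two_hyper m)"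
  proof (cases "m = 1")
    case True
    then have "sigma m = id"
      by (auto simp: sigma_def)
    then show ?thesis
      using x galg.span_zero by simp
  next
    case False
    with assms have m: "2 \<le> m" by simp
    obtain \<gamma> q where \<gamma>: "\<gamma> permutes {1..m-1}" and q: "valid_q (m-1) q"
      and a_eq: "alpha m \<gamma> q 0 = a"
      using permutes_eq_alpha_first[OF assms a] .
    have "x = (\<Sum>v | is_cycle_of \<gamma> (m-1) v. E_elt m \<gamma> q v)"
      unfolding x sum_E_elt_over_cycles[OF \<gamma>] sigma_conj_alpha_first[OF assms, symmetric] a_eq ..
    also have "\<dots> \<in> galg.span (one_hyper m \<union> two_hyper m)"
      by (intro galg.span_sum galg.span_base E_elt_mem_hyper[OF m \<gamma> q]) simp
    finally show ?thesis .
  qed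
qed

theorem lemma2:
  fixes m :: nat
  assumes "1 \<le> m"
  shows "setsum_sp (lspan (one_hyper m)) (lspan (two_hyper m))
       = setsum_sp (lspan (rot_gens m)) (lspan (two_hyper m))"
proof -
  have "galg.span (one_hyper m \<union> two_hyper m) = galg.span (rot_gens m \<union> two_hyper m)"
    unfolding galg.span_eq
    using one_hyper_subset_span rot_gens_subset_span[OF assms] galg.span_superset by blast
  then show ?thesis
    by (simp add: setsum_sp_lspan)
qed

end
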